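(* Let $P$ be an $n\times n$ doubly stochastic matrix all of whose diagonal entries are positive. If $P$ is SIA, then $P$ is a Sarymsakov matrix (i.e., $P\in\mathcal S_1$).
   Context: $\mathcal N=\{1,\ldots,n\}$. A matrix is stochastic if it is entrywise nonnegative with row sums $1$, and doubly stochastic if in addition its column sums are $1$. A stochastic $P$ is SIA if $\lim_{m\to\infty}P^m=\mathbf 1c^T$ for some nonnegative $c$ with entries summing to $1$. For stochastic $P$ and $\mathcal A\subseteq\mathcal N$, $F_P(\mathcal A)=\{j:\ p_{ij}>0\text{ for some } i\in\mathcal A\}$. A Sarymsakov matrix is a stochastic $P$ such that for any disjoint nonempty $\mathcal A,\tilde{\mathcal A}\subseteq\mathcal N$, either $F_P(\mathcal A)\cap F_P(\tilde{\mathcal A})\neq\emptyset$, or $F_P(\mathcal A)\cap F_P(\tilde{\mathcal A})=\emptyset$ and $|F_P(\mathcal A)\cup F_P(\tilde{\mathcal A})|>|\mathcal A\cup\tilde{\mathcal A}|$. *)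

theory Defs
  imports "HOL-Analysis.Analysis"
begin

text \<open>n x n real matrices are modelled as real^'n^'n with 'n a finite index type
  (the index set N = UNIV, n = CARD('n)).\<close>

definition stochastic :: "real^'n::finite^'n \<Rightarrow> bool" where
  "stochastic P \<longleftrightarrow> (\<forall>i j. P $ i $ j \<ge> 0) \<and> (\<forall>i. (\<Sum>j\<in>UNIV. P $ i $ j) = 1)"

definition doubly_stochastic :: "real^'n::finite^'n \<Rightarrow> bool" where
  "doubly_stochastic P \<longleftrightarrow> stochastic P \<and> (\<forall>j. (\<Sum>i\<in>UNIV. P $ i $ j) = 1)"

definition matpow :: "real^'n::finite^'n \<Rightarrow> nat \<Rightarrow> real^'n^'n" where
  "matpow P m = ((\<lambda>A. A ** P) ^^ m) (mat 1)"

definition SIA :: "real^'n::finite^'n \<Rightarrow> bool" where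
  "SIA P \<longleftrightarrow> stochastic P \<and>
     (\<exists>c :: real^'n. (\<forall>j. c $ j \<ge> 0) \<and> (\<Sum>j\<in>UNIV. c $ j) = 1 \<and>
        (\<lambda>m. matpow P m) \<longlonglongrightarrow> (\<chi> i j. c $ j))"

definition F_set :: "real^'n::finite^'n \<Rightarrow> 'n set \<Rightarrow> 'n set" where
  "F_set P A = {j. \<exists>i\<in>A. P $ i $ j > 0}"

definition sarymsakov :: "real^'n::finite^'n \<Rightarrow> bool" where
  "sarymsakov P \<longleftrightarrow> stochastic P \<and>
     (\<forall>A B :: 'n set. A \<noteq> {} \<longrightarrow> B \<noteq> {} \<longrightarrow> A \<inter> B = {} \<longrightarrow>
        F_set P A \<inter> F_set P B \<noteq> {} \<or>
        (F_set P A \<inter> F_set P B = {} \<and> card (F_set P A \<union> F_set P B) > card (A \<union> B)))"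

end

theory Submission
  imports Defs
begin

text \<open>A diagonal with positive entries gives \<open>A \<subseteq> F(A)\<close>, so a violation of the Sarymsakov
  property yields a nonempty proper set \<open>A\<close> with \<open>F(A) = A\<close>: no mass leaves \<open>A\<close>. Comparing
  row sums and column sums over \<open>A\<close> shows that for a doubly stochastic matrix no mass enters
  \<open>A\<close> either, so \<open>P\<close> and all its powers are block diagonal. The limit \<open>1 c\<^sup>T\<close> of the powers
  would then vanish entrywise, contradicting \<open>\<Sum>c = 1\<close>.\<close>

lemma subset_F_set_if_diag_pos:
  assumes "\<forall>i. P $ i $ i > 0"
  shows "A \<subseteq> F_set P A"
  using assms by (auto simp: F_set_def)

lemma stochastic_zero_if_not_in_F_set:
  assumes "stochastic P" and "i \<in> A" and "j \<notin> F_set P A"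
  shows "P $ i $ j = 0"
  using assms by (force simp: stochastic_def F_set_def intro: antisym)

lemma doubly_stochastic_zero_into_closed:
  fixes P :: "real^'n::finite^'n"
  assumes ds: "doubly_stochastic P" and closed: "F_set P A \<subseteq> A"
    and "i \<notin> A" and "j \<in> A"
  shows "P $ i $ j = 0"
proof -
  have nonneg: "\<And>i j. P $ i $ j \<ge> 0" and rows: "\<And>i. (\<Sum>j\<in>UNIV. P $ i $ j) = 1"
    and cols: "\<And>j. (\<Sum>i\<in>UNIV. P $ i $ j) = 1"
    using ds unfolding doubly_stochastic_def stochastic_def by auto
  have "P $ i $ j = 0" if "i \<in> A" "j \<notin> A" for i j
    using stochastic_zero_if_not_in_F_set[of P] ds closed that
    by (auto simp: doubly_stochastic_def)
  then have rows_A: "(\<Sum>j\<in>A. P $ i $ j) = 1" if "i \<in> A" for i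
    using rows[of i] sum.mono_neutral_right[of UNIV A "\<lambda>j. P $ i $ j"] that by auto
  have split: "(\<Sum>i\<in>UNIV. P $ i $ j) = (\<Sum>i\<in>A. P $ i $ j) + (\<Sum>i\<in>-A. P $ i $ j)" for j
    by (metis Compl_eq_Diff_UNIV add.commute finite sum.subset_diff top_greatest)
  \<comment> \<open>The columns in \<open>A\<close> carry total mass \<open>|A|\<close>, all of which already comes from the rows in \<open>A\<close>.\<close>
  have "(\<Sum>j\<in>A. \<Sum>i\<in>A. P $ i $ j) = real (card A)"
    using rows_A by (simp add: sum.swap[of _ A A])
  moreover have "(\<Sum>j\<in>A. \<Sum>i\<in>UNIV. P $ i $ j) = real (card A)"
    using cols by simp
  ultimately have "(\<Sum>j\<in>A. \<Sum>i\<in>-A. P $ i $ j) = 0"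
    using split by (simp add: sum.distrib)
  then have "\<forall>j\<in>A. \<forall>i\<in>-A. P $ i $ j = 0"
    by (simp add: sum_nonneg_eq_0_iff sum_nonneg nonneg)
  then show ?thesis using assms by auto
qed

lemma matpow_block_diagonal:
  fixes P :: "real^'n::finite^'n"
  assumes "\<forall>i j. (i \<in> A) \<noteq> (j \<in> A) \<longrightarrow> P $ i $ j = 0"
    and "(i \<in> A) \<noteq> (j \<in> A)"
  shows "matpow P m $ i $ j = 0"
  using assms(2)
proof (induction m arbitrary: j)
  case 0
  then show ?case by (auto simp: matpow_def mat_def)
next
  case (Suc m)
  have zero: "matpow P m $ i $ k * P $ k $ j = 0" for k
    using assms(1) Suc by (cases "(i \<in> A) = (k \<in> A)") auto
  have "matpow P (Suc m) $ i $ j = (\<Sum>k\<in>UNIV. matpow P m $ i $ k * P $ k $ j)"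
    by (simp add: matpow_def matrix_matrix_mult_def)
  also have "\<dots> = 0"
    by (intro sum.neutral ballI zero)
  finally show ?case .
qed

lemma SIA_block_diagonal_trivial:
  fixes P :: "real^'n::finite^'n"
  assumes "SIA P" and "\<forall>i j. (i \<in> A) \<noteq> (j \<in> A) \<longrightarrow> P $ i $ j = 0" and "A \<noteq> {}"
  shows "A = UNIV"
proof (rule ccontr)
  assume "A \<noteq> UNIV"
  obtain c :: "real^'n" where c: "(\<Sum>j\<in>UNIV. c $ j) = 1"
    and lim: "(\<lambda>m. matpow P m) \<longlonglongrightarrow> (\<chi> i j. c $ j)"
    using assms(1) unfolding SIA_def by blast
  have "c $ j = 0" for j
  proof -
    obtain i where i: "(i \<in> A) \<noteq> (j \<in> A)"
      using \<open>A \<noteq> UNIV\<close> assms(3) by blast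
    have "(\<lambda>m. matpow P m $ i $ j) \<longlonglongrightarrow> c $ j"
      using tendsto_vec_nth[OF tendsto_vec_nth[OF lim], of i j] by simp
    moreover have "(\<lambda>m. matpow P m $ i $ j) = (\<lambda>m. 0)"
      using matpow_block_diagonal[OF assms(2) i] by auto
    ultimately show ?thesis
      using LIMSEQ_unique tendsto_const by metis
  qed
  then show False using c by simp
qed

lemma card_F_set_gt:
  fixes P :: "real^'n::finite^'n"
  assumes ds: "doubly_stochastic P" and diag: "\<forall>i. P $ i $ i > 0" and "SIA P"
    and "A \<noteq> {}" and "A \<noteq> UNIV"
  shows "card A < card (F_set P A)"
proof -
  have "A \<subseteq> F_set P A" using subset_F_set_if_diag_pos[OF diag] .
  moreover have "F_set P A \<noteq> A"
  proof
    assume closed: "F_set P A = A"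
    have "P $ i $ j = 0" if "(i \<in> A) \<noteq> (j \<in> A)" for i j
    proof (cases "i \<in> A")
      case True
      then show ?thesis
        using stochastic_zero_if_not_in_F_set[of P i A j] ds closed that
        by (auto simp: doubly_stochastic_def)
    next
      case False
      then show ?thesis
        using doubly_stochastic_zero_into_closed[OF ds, of A i j] closed that by auto
    qed
    then show False
      using SIA_block_diagonal_trivial[OF \<open>SIA P\<close>] assms(4,5) by blast
  qed
  ultimately show ?thesis by (simp add: psubset_card_mono)
qed

theorem proposition3:
  fixes P :: "real^'n::finite^'n"
  assumes "doubly_stochastic P"
    and "\<forall>i. P $ i $ i > 0"
    and "SIA P"
  shows "sarymsakov P"
  unfolding sarymsakov_def
proof (intro conjI allI impI)
  show "stochastic P" using assms(1) by (simp add: doubly_stochastic_def)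
  fix A B :: "'n set"
  assume "A \<noteq> {}" "B \<noteq> {}" "A \<inter> B = {}"
  show "F_set P A \<inter> F_set P B \<noteq> {} \<or>
      F_set P A \<inter> F_set P B = {} \<and> card (F_set P A \<union> F_set P B) > card (A \<union> B)"
  proof (cases "F_set P A \<inter> F_set P B = {}")
    case disjoint: True
    have "card A < card (F_set P A)"
      using card_F_set_gt[OF assms] \<open>A \<noteq> {}\<close> \<open>B \<noteq> {}\<close> \<open>A \<inter> B = {}\<close> by blast
    moreover have "card B \<le> card (F_set P B)"
      using subset_F_set_if_diag_pos[OF assms(2)] by (simp add: card_mono)
    ultimately have "card (A \<union> B) < card (F_set P A \<union> F_set P B)"
      using \<open>A \<inter> B = {}\<close> disjoint by (simp add: card_Un_disjoint)
    with disjoint show ?thesis by simp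
  qed simp
qed

end
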